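(* Let $\delta=\ln 3$, let $X\subset\mathbb{H}^n$ be finite with $|X|\le 2^c+2$ for some $c>0$, and let $(T,p)$ be a Gromov approximating tree for $X$. Let $x_1,x_2,x_3\in X$, $\Delta=[x_1x_2x_3]\subset\mathbb{H}^n$ the geodesic triangle, $T_\Delta\subset T$ the tripod spanned by $p(x_1),p(x_2),p(x_3)$ with branch point $o$, and $o_{ij}\in[x_ix_j]$ the internal points of $\Delta$, i.e. the points with $d(x_i,o_{ij})=\frac12\big(d(x_i,x_j)+d(x_i,x_l)-d(x_j,x_l)\big)$ where $\{i,j,l\}=\{1,2,3\}$. Let $p_\Delta:\Delta\to T_\Delta$ be the map that sends $x_i\mapsto p(x_i)$, $o_{ij}\mapsto o$, and maps each segment $[x_io_{ij}]$ onto $[p(x_i)o]$ by the dilation $d_T(p(x_i),p_\Delta(z))=\frac{d_T(p(x_i),o)}{d(x_i,o_{ij})}\,d(x_i,z)$. Then $p_\Delta$ is a $(1,4c\delta+2\delta)$-quasi-isometry, where $\Delta$ carries the metric restricted from $\mathbb{H}^n$.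
   Context: A Gromov approximating tree for a finite $X\subset\mathbb{H}^n$ with $|X|\le 2^c+2$ is a pair $(T,p)$ where $T$ is a finite metric tree and $p:X\to T$ maps $X$ to vertices of $T$ such that every leaf (valence-one vertex) of $T$ lies in $p(X)$, and $d(x_1,x_2)-2c\delta\le d_T(p(x_1),p(x_2))\le d(x_1,x_2)$ for all $x_1,x_2\in X$, with $\delta=\ln 3$. Maps $f:X\to Y$ is an $(L,A)$-quasi-isometry if $-A+\frac1L d_X(a,b)\le d_Y(f(a),f(b))\le Ld_X(a,b)+A$ for all $a,b$, and there is $\bar f:Y\to X$ satisfying the analogous inequalities with $d_X(a,\bar f f(a))\le A$ and $d_Y(y,f\bar f(y))\le A$ for all $a\in X,y\in Y$. *)

theory Defs
  imports "HOL-Analysis.Analysis"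
begin

definition geodesic_path :: "('a \<Rightarrow> 'a \<Rightarrow> real) \<Rightarrow> 'a set \<Rightarrow> (real \<Rightarrow> 'a) \<Rightarrow> 'a \<Rightarrow> 'a \<Rightarrow> bool" where
  "geodesic_path d S \<gamma> a b \<longleftrightarrow>
     \<gamma> 0 = a \<and> \<gamma> (d a b) = b \<and> \<gamma> ` {0..d a b} \<subseteq> S \<and>
     (\<forall>s\<in>{0..d a b}. \<forall>t\<in>{0..d a b}. d (\<gamma> s) (\<gamma> t) = \<bar>s - t\<bar>)"

text \<open>The geodesic segment [a b] (union of images of all geodesics from a to b;
  in uniquely geodesic spaces this is the unique geodesic segment).\<close>
definition gseg :: "('a \<Rightarrow> 'a \<Rightarrow> real) \<Rightarrow> 'a set \<Rightarrow> 'a \<Rightarrow> 'a \<Rightarrow> 'a set" where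
  "gseg d S a b = (\<Union>\<gamma>\<in>{\<gamma>. geodesic_path d S \<gamma> a b}. \<gamma> ` {0..d a b})"

definition hyp_space :: "(real^'n) set" where
  "hyp_space = ball 0 1"

definition hdist :: "real^'n \<Rightarrow> real^'n \<Rightarrow> real" where
  "hdist x y = arcosh (1 + 2 * (norm (x - y))^2 / ((1 - (norm x)^2) * (1 - (norm y)^2)))"

definition hseg :: "real^'n \<Rightarrow> real^'n \<Rightarrow> (real^'n) set" where
  "hseg a b = gseg hdist hyp_space a b"

definition geod_triangle :: "real^'n \<Rightarrow> real^'n \<Rightarrow> real^'n \<Rightarrow> (real^'n) set" where
  "geod_triangle x1 x2 x3 = hseg x1 x2 \<union> hseg x2 x3 \<union> hseg x1 x3"

definition real_tree :: "'b::metric_space set \<Rightarrow> bool" where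
  "real_tree T \<longleftrightarrow>
     (\<forall>a\<in>T. \<forall>b\<in>T. \<exists>\<gamma>. geodesic_path dist T \<gamma> a b) \<and>
     (\<forall>a\<in>T. \<forall>b\<in>T. \<forall>\<gamma>1 \<gamma>2. geodesic_path dist T \<gamma>1 a b \<and> geodesic_path dist T \<gamma>2 a b
         \<longrightarrow> (\<forall>t\<in>{0..dist a b}. \<gamma>1 t = \<gamma>2 t)) \<and>
     (\<forall>a\<in>T. \<forall>b\<in>T. \<forall>c\<in>T. gseg dist T a b \<inter> gseg dist T b c = {b}
         \<longrightarrow> gseg dist T a b \<union> gseg dist T b c = gseg dist T a c)"

definition valence :: "'b::metric_space set \<Rightarrow> 'b \<Rightarrow> nat" where
  "valence T v = card (components (T - {v}))"

definition finite_metric_tree :: "'b::metric_space set \<Rightarrow> 'b set \<Rightarrow> bool" where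
  "finite_metric_tree T V \<longleftrightarrow>
     real_tree T \<and> T \<noteq> {} \<and>
     (\<exists>F. finite F \<and> F \<subseteq> T \<and> T = (\<Union>a\<in>F. \<Union>b\<in>F. gseg dist T a b)) \<and>
     finite V \<and> V \<subseteq> T \<and> {v\<in>T. valence T v \<noteq> 2} \<subseteq> V"

definition tripod :: "'b::metric_space set \<Rightarrow> 'b \<Rightarrow> 'b \<Rightarrow> 'b \<Rightarrow> 'b set" where
  "tripod T a b c = gseg dist T a b \<union> gseg dist T b c \<union> gseg dist T a c"

definition gromov_approx_tree ::
  "real \<Rightarrow> (real^'n) set \<Rightarrow> 'b::metric_space set \<Rightarrow> 'b set \<Rightarrow> (real^'n \<Rightarrow> 'b) \<Rightarrow> bool" where
  "gromov_approx_tree c X T V p \<longleftrightarrow>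
     finite_metric_tree T V \<and> p ` X \<subseteq> V \<and>
     {v\<in>T. valence T v = 1} \<subseteq> p ` X \<and>
     (\<forall>x1\<in>X. \<forall>x2\<in>X. hdist x1 x2 - 2 * c * ln 3 \<le> dist (p x1) (p x2) \<and>
                      dist (p x1) (p x2) \<le> hdist x1 x2)"

definition quasi_isometry ::
  "('a \<Rightarrow> 'a \<Rightarrow> real) \<Rightarrow> 'a set \<Rightarrow> ('b \<Rightarrow> 'b \<Rightarrow> real) \<Rightarrow> 'b set \<Rightarrow> ('a \<Rightarrow> 'b) \<Rightarrow> real \<Rightarrow> real \<Rightarrow> bool" where
  "quasi_isometry dX X dY Y f L A \<longleftrightarrow>
     f ` X \<subseteq> Y \<and>
     (\<forall>a\<in>X. \<forall>b\<in>X. - A + dX a b / L \<le> dY (f a) (f b) \<and> dY (f a) (f b) \<le> L * dX a b + A) \<and>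
     (\<exists>g. g ` Y \<subseteq> X \<and>
        (\<forall>y\<in>Y. \<forall>y'\<in>Y. - A + dY y y' / L \<le> dX (g y) (g y') \<and> dX (g y) (g y') \<le> L * dY y y' + A) \<and>
        (\<forall>a\<in>X. dX a (g (f a)) \<le> A) \<and> (\<forall>y\<in>Y. dY y (f (g y)) \<le> A))"

definition dilation_on_seg ::
  "(real^'n \<Rightarrow> 'b::metric_space) \<Rightarrow> 'b set \<Rightarrow> real^'n \<Rightarrow> real^'n \<Rightarrow> 'b \<Rightarrow> 'b \<Rightarrow> bool" where
  "dilation_on_seg pD T xi oij pxi ob \<longleftrightarrow>
     (\<forall>z\<in>hseg xi oij. pD z \<in> gseg dist T pxi ob \<and>
        dist pxi (pD z) = dist pxi ob / hdist xi oij * hdist xi z)"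

end

theory Submission
  imports Defs
begin

(* Each side [xi xj] splits at the internal point oij into two legs [xi oij], [xj oij] of length
   g_i = (xj|xk)_xi resp. g_j, and p_Delta dilates the leg [xi oij] onto the tree leg [p(xi) o].
   The tree legs have lengths D_i with |D_i - g_i| <= E = 2 c delta, by the approximation
   property of the tree.  For two points a, b of Delta we compare d(a,b) with d_T(pa,pb):
   - in the tree, d_T is |difference| of distances to p(xi) on one tree leg, and the sum of
     distances to o on two different tree legs;
   - in Delta the same formulas hold up to delta resp. 2 delta, by thinness of hyperbolic
     triangles: a point at distance t <= g_i from xi on [xi xj] is delta-close to the point at
     distance t on [xi xl];
   - the dilation factor D_i / g_i costs at most |D_i - g_i| <= E per leg.
   Hence p_Delta distorts distances by at most 2E + 2 delta, and since it is onto the tripod it is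
   a (1, 2E + 2 delta) quasi-isometry. *)

text \<open>The Lorentzian bilinear form \<open>\<langle>(s,v),(t,w)\<rangle> = s t - v \<bullet> w\<close>; its upper sheet
  \<open>\<langle>P,P\<rangle> = 1, fst P > 0\<close> is the hyperboloid model of \<open>\<real>\<^sup>n\<close> hyperbolic space.\<close>
definition mink :: "real \<times> (real^'n) \<Rightarrow> real \<times> (real^'n) \<Rightarrow> real" where
  "mink P Q = fst P * fst Q - inner (snd P) (snd Q)"

lemma mink_sym: "mink P Q = mink Q P"
  by (simp add: mink_def inner_commute mult.commute)

lemma mink_add_left: "mink (P + Q) R = mink P R + mink Q R"
  and mink_add_right: "mink R (P + Q) = mink R P + mink R Q"
  and mink_diff_left: "mink (P - Q) R = mink P R - mink Q R"
  and mink_diff_right: "mink R (P - Q) = mink R P - mink R Q"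
  and mink_scale_left: "mink (c *\<^sub>R P) R = c * mink P R"
  and mink_scale_right: "mink R (c *\<^sub>R P) = c * mink R P"
  by (simp_all add: mink_def inner_add_left inner_add_right inner_diff_left inner_diff_right
      algebra_simps)

lemmas mink_simps = mink_add_left mink_add_right mink_diff_left mink_diff_right
  mink_scale_left mink_scale_right

lemma mink_orthogonal_spacelike:
  assumes Q: "fst Q > 0" "mink Q Q = 1" and N: "mink N Q = 0"
  shows "mink N N \<le> 0" and "mink N N = 0 \<Longrightarrow> N = 0"
proof -
  obtain t v where N_eq: "N = (t, v)" by (cases N)
  obtain s w where Q_eq: "Q = (s, w)" by (cases Q)
  have s: "s > 0" "s^2 - (norm w)^2 = 1"
    using Q by (auto simp: Q_eq mink_def power2_eq_square dot_square_norm)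
  have ts: "t * s = inner v w" using N by (simp add: N_eq Q_eq mink_def)
  have "(t * s)^2 \<le> (norm v * norm w)^2"
    unfolding ts using Cauchy_Schwarz_ineq[of v w]
    by (simp add: power_mult_distrib power2_norm_eq_inner)
  hence "t^2 * s^2 \<le> (norm v)^2 * (s^2 - 1)"
    using s by (simp add: power_mult_distrib) (metis add_diff_cancel_left' diff_add_cancel)
  hence key: "s^2 * (t^2 - (norm v)^2) \<le> - ((norm v)^2)" by (simp add: algebra_simps)
  have NN: "mink N N = t^2 - (norm v)^2"
    by (simp add: N_eq mink_def power2_eq_square dot_square_norm)
  have "s^2 * (t^2 - (norm v)^2) \<le> 0" using key by (smt (verit) zero_le_power2)
  thus "mink N N \<le> 0" unfolding NN using s by (simp add: mult_le_0_iff)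
  assume "mink N N = 0"
  hence "(norm v)^2 \<le> 0" using key NN by simp
  hence "v = 0" by simp
  hence "t = 0" using ts s by simp
  thus "N = 0" using \<open>v = 0\<close> by (simp add: N_eq zero_prod_def)
qed

lemma mink_orthogonal_cauchy_schwarz:
  assumes Q: "fst Q > 0" "mink Q Q = 1" and U: "mink U Q = 0" and W: "mink W Q = 0"
  shows "(mink U W)^2 \<le> mink U U * mink W W"
proof (cases "mink W W = 0")
  case True
  hence "W = 0" using mink_orthogonal_spacelike(2)[OF Q W] by simp
  thus ?thesis by (simp add: mink_def)
next
  case False
  hence neg: "mink W W < 0" using mink_orthogonal_spacelike(1)[OF Q W] by simp
  define x where "x = - mink U W / mink W W"
  have "mink (U + x *\<^sub>R W) Q = 0" using U W by (simp add: mink_simps)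
  hence "mink (U + x *\<^sub>R W) (U + x *\<^sub>R W) \<le> 0" using mink_orthogonal_spacelike(1)[OF Q] by blast
  hence "mink U U + 2 * x * mink U W + x^2 * mink W W \<le> 0"
    by (simp add: mink_simps mink_sym[of W U] power2_eq_square algebra_simps)
  hence "mink U U - (mink U W)^2 / mink W W \<le> 0"
    using neg by (simp add: x_def power2_eq_square field_simps)
  thus ?thesis using neg by (simp add: field_simps)
qed

section \<open>The hyperboloid model of the Poincar\'e ball\<close>

text \<open>The standard isometry from the Poincar\'e ball onto the hyperboloid.\<close>
definition to_hyperboloid :: "real^'n \<Rightarrow> real \<times> (real^'n)" where
  "to_hyperboloid x = ((1 + (norm x)^2) / (1 - (norm x)^2), (2 / (1 - (norm x)^2)) *\<^sub>R x)"

text \<open>Points of the ball have norm below one, so all denominators below are positive.\<close>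
lemma hyp_space_norm: "x \<in> hyp_space \<Longrightarrow> (norm x)^2 < 1"
  by (simp add: hyp_space_def abs_square_less_1)

lemma mink_to_hyperboloid:
  assumes "x \<in> hyp_space" "y \<in> hyp_space"
  shows "mink (to_hyperboloid x) (to_hyperboloid y)
           = 1 + 2 * (norm (x - y))^2 / ((1 - (norm x)^2) * (1 - (norm y)^2))"
proof -
  have "1 - (norm x)^2 \<noteq> 0" "1 - (norm y)^2 \<noteq> 0" using hyp_space_norm assms by fastforce+
  moreover have "(norm (x - y))^2 = (norm x)^2 + (norm y)^2 - 2 * inner x y"
    by (simp add: power2_norm_eq_inner inner_diff inner_commute)
  ultimately show ?thesis
    by (simp add: to_hyperboloid_def mink_def divide_simps) (simp add: algebra_simps)
qed

lemma mink_to_hyperboloid_ge_1: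
  assumes "x \<in> hyp_space" "y \<in> hyp_space"
  shows "mink (to_hyperboloid x) (to_hyperboloid y) \<ge> 1"
  using hyp_space_norm[OF assms(1)] hyp_space_norm[OF assms(2)]
  unfolding mink_to_hyperboloid[OF assms] by simp

lemma hdist_eq_arcosh_mink:
  "x \<in> hyp_space \<Longrightarrow> y \<in> hyp_space \<Longrightarrow> hdist x y = arcosh (mink (to_hyperboloid x) (to_hyperboloid y))"
  by (simp add: hdist_def mink_to_hyperboloid)

text \<open>In particular the hyperbolic cosine of the distance is bilinear in the lifts.\<close>
lemma cosh_hdist:
  "x \<in> hyp_space \<Longrightarrow> y \<in> hyp_space \<Longrightarrow> cosh (hdist x y) = mink (to_hyperboloid x) (to_hyperboloid y)"
  by (simp add: hdist_eq_arcosh_mink mink_to_hyperboloid_ge_1)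

lemma hdist_nonneg: "x \<in> hyp_space \<Longrightarrow> y \<in> hyp_space \<Longrightarrow> hdist x y \<ge> 0"
  by (simp add: hdist_eq_arcosh_mink mink_to_hyperboloid_ge_1)

lemma hdist_sym: "hdist x y = hdist y x"
  by (simp add: hdist_def norm_minus_commute mult.commute)

lemma hdist_refl: "hdist x x = 0"
  by (simp add: hdist_def)

lemma hdist_eq_0:
  assumes "x \<in> hyp_space" "y \<in> hyp_space" "hdist x y = 0"
  shows "x = y"
proof -
  have pos: "1 - (norm x)^2 > 0" "1 - (norm y)^2 > 0" using hyp_space_norm assms by auto
  have "cosh (hdist x y) = 1" using assms(3) by simp
  hence "2 * (norm (x - y))^2 / ((1 - (norm x)^2) * (1 - (norm y)^2)) = 0"
    unfolding cosh_hdist[OF assms(1,2)] mink_to_hyperboloid[OF assms(1,2)] by simp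
  thus ?thesis using pos by simp
qed

lemma to_hyperboloid_on_hyperboloid:
  assumes "x \<in> hyp_space"
  shows "fst (to_hyperboloid x) > 0" "mink (to_hyperboloid x) (to_hyperboloid x) = 1"
proof -
  have "1 - (norm x)^2 > 0" using hyp_space_norm assms by auto
  moreover have "1 + (norm x)^2 > 0" by (simp add: add_pos_nonneg)
  ultimately show "fst (to_hyperboloid x) > 0" by (simp add: to_hyperboloid_def)
  show "mink (to_hyperboloid x) (to_hyperboloid x) = 1" using mink_to_hyperboloid[OF assms assms] by simp
qed

lemma to_hyperboloid_inj:
  assumes "x \<in> hyp_space" "y \<in> hyp_space" "to_hyperboloid x = to_hyperboloid y"
  shows "x = y"
proof -
  have "hdist x y = arcosh (mink (to_hyperboloid x) (to_hyperboloid x))"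
    using assms by (simp add: hdist_eq_arcosh_mink)
  also have "\<dots> = 0" using to_hyperboloid_on_hyperboloid(2)[OF assms(1)] by simp
  finally show ?thesis using hdist_eq_0 assms by blast
qed

lemma cosh_sq: "cosh (x::real) * cosh x = 1 + sinh x * sinh x"
  using cosh_square_eq[of x] by (simp add: power2_eq_square)

text \<open>The triangle inequality, from the reverse Cauchy--Schwarz inequality applied to the
  components of two lifts orthogonal to the lift of the middle point.\<close>
lemma hdist_triangle:
  assumes "x \<in> hyp_space" "y \<in> hyp_space" "z \<in> hyp_space"
  shows "hdist x z \<le> hdist x y + hdist y z"
proof -
  define P Q R where "P = to_hyperboloid x" "Q = to_hyperboloid y" "R = to_hyperboloid z"
  define a b where "a = hdist x y" "b = hdist y z"
  have PQ: "mink P Q = cosh a" "mink Q R = cosh b"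
    using assms by (simp_all add: P_Q_R_def a_b_def cosh_hdist)
  have HQ: "mink P P = 1" "mink Q Q = 1" "mink R R = 1" "fst Q > 0"
    using to_hyperboloid_on_hyperboloid assms by (auto simp: P_Q_R_def)
  define U W where "U = P - cosh a *\<^sub>R Q" "W = R - cosh b *\<^sub>R Q"
  have U0: "mink U Q = 0" and W0: "mink W Q = 0"
    using PQ HQ by (simp_all add: U_W_def mink_simps mink_sym[of R Q])
  have UU: "mink U U = - (sinh a ^ 2)" and WW: "mink W W = - (sinh b ^ 2)"
    using PQ HQ by (simp_all add: U_W_def mink_simps mink_sym[of Q P] mink_sym[of R Q]
        cosh_sq power2_eq_square algebra_simps)
  have UW: "mink U W = mink P R - cosh a * cosh b"
    using PQ HQ by (simp add: U_W_def mink_simps mink_sym[of Q P] algebra_simps)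
  have nn: "0 \<le> a" "0 \<le> b" using hdist_nonneg assms by (auto simp: a_b_def)
  have "(mink U W)^2 \<le> (sinh a * sinh b)^2"
    using mink_orthogonal_cauchy_schwarz[OF HQ(4) HQ(2) U0 W0] UU WW by (simp add: power_mult_distrib)
  moreover have "sinh a * sinh b \<ge> 0" using nn by simp
  ultimately have "mink U W \<le> sinh a * sinh b" by (rule power2_le_imp_le)
  hence "cosh (hdist x z) \<le> cosh (a + b)"
    using assms UW by (simp add: P_Q_R_def cosh_hdist cosh_add)
  moreover have "0 \<le> hdist x z" "0 \<le> a + b" using hdist_nonneg[of x z] nn assms by auto
  ultimately show ?thesis using cosh_real_nonneg_le_iff by (simp add: a_b_def)
qed

lemma to_hyperboloid_between:
  assumes H: "x \<in> hyp_space" "y \<in> hyp_space" "z \<in> hyp_space"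
    and d: "hdist x z = s" "hdist z y = D - s" "hdist x y = D" "D > 0"
  shows "to_hyperboloid z
           = (sinh (D - s) / sinh D) *\<^sub>R to_hyperboloid x + (sinh s / sinh D) *\<^sub>R to_hyperboloid y"
proof -
  define P R Z where "P = to_hyperboloid x" "R = to_hyperboloid y" "Z = to_hyperboloid z"
  define \<alpha> \<beta> where "\<alpha> = sinh (D - s) / sinh D" "\<beta> = sinh s / sinh D"
  have sD: "sinh D > 0" using d by simp
  have ZP: "mink Z P = cosh s" and ZR: "mink Z R = cosh (D - s)" and PR: "mink P R = cosh D"
    using H d cosh_hdist[of z x] cosh_hdist[of z y] cosh_hdist[of x y]
    by (simp_all add: P_R_Z_def hdist_sym)
  have HP: "mink P P = 1" "mink R R = 1" "mink Z Z = 1" "fst P > 0"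
    using to_hyperboloid_on_hyperboloid H by (auto simp: P_R_Z_def)
  have "sinh (D-s) + sinh s * cosh D = sinh D * cosh s" by (simp add: sinh_diff algebra_simps)
  hence c1: "\<alpha> + \<beta> * cosh D = cosh s" using sD by (simp add: \<alpha>_\<beta>_def field_simps)
  have "sinh (D-s) * cosh D + sinh s - sinh D * cosh (D-s)
          = sinh s * (1 + sinh D * sinh D - cosh D * cosh D)"
    by (simp add: sinh_diff cosh_diff algebra_simps)
  hence "sinh (D-s) * cosh D + sinh s = sinh D * cosh (D-s)" by (simp add: cosh_sq)
  hence c2: "\<alpha> * cosh D + \<beta> = cosh (D - s)" using sD by (simp add: \<alpha>_\<beta>_def field_simps)
  have "sinh (D-s) * cosh s + sinh s * cosh (D-s) = sinh D"
    using sinh_add[of "D-s" s] by (simp add: mult.commute)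
  hence c3: "\<alpha> * cosh s + \<beta> * cosh (D - s) = 1" using sD by (simp add: \<alpha>_\<beta>_def field_simps)
  define W where "W = \<alpha> *\<^sub>R P + \<beta> *\<^sub>R R"
  have WP: "mink W P = cosh s" using HP PR c1 by (simp add: W_def mink_simps mink_sym[of R P])
  have WR: "mink W R = cosh (D - s)" using HP PR c2 by (simp add: W_def mink_simps)
  have WW: "mink W W = 1"
    using WP WR c3 by (simp add: W_def mink_simps mink_sym[of P W] mink_sym[of R W])
  have ZW: "mink Z W = 1" using ZP ZR c3 by (simp add: W_def mink_simps)
  have "mink (Z - W) P = 0" using ZP WP by (simp add: mink_simps)
  moreover have "mink (Z - W) (Z - W) = 0"
    using HP WW ZW by (simp add: mink_simps mink_sym[of W Z])
  ultimately have "Z - W = 0" using mink_orthogonal_spacelike(2)[OF HP(4) HP(1)] by blast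
  thus ?thesis by (simp add: P_R_Z_def W_def \<alpha>_\<beta>_def)
qed

definition on_geodesic :: "real^'n \<Rightarrow> real^'n \<Rightarrow> real \<Rightarrow> real^'n \<Rightarrow> bool" where
  "on_geodesic x y t z \<longleftrightarrow> z \<in> hyp_space \<and> hdist x z = t \<and> hdist z y = hdist x y - t"

lemma on_geodesic_range:
  assumes "x \<in> hyp_space" "y \<in> hyp_space" "on_geodesic x y t z"
  shows "0 \<le> t" "t \<le> hdist x y"
  using hdist_nonneg[of x z] hdist_nonneg[of z y] assms by (auto simp: on_geodesic_def)

lemma on_geodesic_swap:
  "on_geodesic x y t z \<Longrightarrow> on_geodesic y x (hdist x y - t) z"
  by (auto simp: on_geodesic_def hdist_sym)

lemma on_geodesic_unique:
  assumes "x \<in> hyp_space" "y \<in> hyp_space" "on_geodesic x y t z" "on_geodesic x y t z'"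
  shows "z = z'"
proof (cases "hdist x y = 0")
  case True
  hence "t = 0" using on_geodesic_range[OF assms(1-3)] by simp
  thus ?thesis using hdist_eq_0[of x z] hdist_eq_0[of x z'] assms by (auto simp: on_geodesic_def)
next
  case False
  hence D: "hdist x y > 0" using hdist_nonneg[OF assms(1,2)] by simp
  have "to_hyperboloid z = to_hyperboloid z'"
    using assms(3,4) to_hyperboloid_between[OF assms(1,2) _ _ _ refl D, of z t]
      to_hyperboloid_between[OF assms(1,2) _ _ _ refl D, of z' t]
    by (simp add: on_geodesic_def)
  thus ?thesis using to_hyperboloid_inj assms(3,4) by (auto simp: on_geodesic_def)
qed

section \<open>Thinness of hyperbolic triangles\<close>

text \<open>Hyperbolic functions through the exponential, to verify identities as rational identities.\<close>
lemma sinh_exp: "sinh (x::real) = (exp x - 1 / exp x) / 2"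
  by (simp add: sinh_field_def exp_minus inverse_eq_divide)

lemma cosh_exp: "cosh (x::real) = (exp x + 1 / exp x) / 2"
  by (simp add: cosh_field_def exp_minus inverse_eq_divide)

text \<open>A hyperbolic-function identity: it expands the Minkowski product of the two points
  at distance \<open>t\<close> from a vertex when the other side lengths are extremal.\<close>
lemma sinh_cosh_triangle_identity:
  fixes u v t :: real
  shows "sinh u * sinh v + sinh u * sinh t * cosh (v + t) + sinh t * sinh v * cosh (u + t)
           + sinh t * sinh t * cosh (u + v)
         = sinh (u + t) * sinh (v + t) + 2 * sinh t * sinh t * sinh u * sinh v"
proof -
  have "\<And>a b c :: real. a > 0 \<Longrightarrow> b > 0 \<Longrightarrow> c > 0 \<Longrightarrow>
    ((a - 1/a)/2)*((b - 1/b)/2) + ((a - 1/a)/2)*((c - 1/c)/2)*((b*c + 1/(b*c))/2)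
       + ((c - 1/c)/2)*((b - 1/b)/2)*((a*c + 1/(a*c))/2) + ((c - 1/c)/2)*((c - 1/c)/2)*((a*b + 1/(a*b))/2)
       = ((a*c - 1/(a*c))/2)*((b*c - 1/(b*c))/2) + 2*((c - 1/c)/2)*((c - 1/c)/2)*((a - 1/a)/2)*((b - 1/b)/2)"
    by (simp add: field_simps)
  from this[of "exp u" "exp v" "exp t"] show ?thesis
    by (simp add: sinh_exp cosh_exp exp_add mult.commute)
qed

lemma exp_mult_sinh_le: fixes u t :: real assumes "0 \<le> t" shows "exp t * sinh u \<le> sinh (u + t)"
proof -
  have "sinh (u + t) - exp t * sinh u = sinh t * (cosh u - sinh u)"
    unfolding sinh_add cosh_plus_sinh[symmetric] by (simp add: algebra_simps)
  moreover have "sinh t * (cosh u - sinh u) \<ge> 0" using assms sinh_le_cosh_real[of u] by simp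
  ultimately show ?thesis by simp
qed

text \<open>The numerical core of thinness: with side lengths \<open>A, B\<close> from the vertex, opposite side
  \<open>C \<le> A + B - 2t\<close>, the Minkowski product of the two points at distance \<open>t\<close> is at most
  \<open>3/2 \<cdot> sinh A sinh B\<close> after clearing denominators.\<close>
lemma thinness_estimate:
  fixes A B C t :: real
  assumes "0 < t" "t \<le> A" "t \<le> B" "0 \<le> C" "C \<le> A + B - 2*t"
  shows "sinh (A-t) * sinh (B-t) + sinh (A-t) * sinh t * cosh B + sinh t * sinh (B-t) * cosh A
          + sinh t * sinh t * cosh C \<le> 3/2 * (sinh A * sinh B)"
proof -
  define u v where "u = A - t" "v = B - t"
  have uv: "u \<ge> 0" "v \<ge> 0" "A = u + t" "B = v + t" using assms by (auto simp: u_v_def)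
  have "cosh C \<le> cosh (u + v)" using assms uv cosh_real_nonneg_le_iff[of C "u+v"] by simp
  hence 1: "sinh t * sinh t * cosh C \<le> sinh t * sinh t * cosh (u + v)"
    by (simp add: mult_left_mono)
  have st: "0 \<le> sinh t" "0 \<le> sinh u" "0 \<le> sinh v" using assms uv by auto
  have e1: "exp t * sinh u \<le> sinh (u + t)" "exp t * sinh v \<le> sinh (v + t)"
    using assms exp_mult_sinh_le[of t u] exp_mult_sinh_le[of t v] by auto
  have "sinh t * sinh t \<le> (exp t / 2) * (exp t / 2)"
    by (rule mult_mono) (use st in \<open>auto simp: sinh_exp\<close>)
  hence "2 * (sinh t * sinh t) * (sinh u * sinh v) \<le> 2 * ((exp t / 2) * (exp t / 2)) * (sinh u * sinh v)"
    using st by (intro mult_right_mono) auto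
  hence "2 * sinh t * sinh t * sinh u * sinh v \<le> 1/2 * ((exp t * sinh u) * (exp t * sinh v))"
    by (simp add: ac_simps)
  also have "\<dots> \<le> 1/2 * (sinh (u + t) * sinh (v + t))"
    using e1 st by (simp add: mult_mono)
  finally have 2: "2 * sinh t * sinh t * sinh u * sinh v \<le> 1/2 * (sinh (u + t) * sinh (v + t))" .
  show ?thesis
    using 1 2 sinh_cosh_triangle_identity[of u v t] unfolding uv(3,4) by simp
qed

lemma hyperbolic_triangle_thin:
  assumes H: "x \<in> hyp_space" "y \<in> hyp_space" "z \<in> hyp_space"
    and a: "on_geodesic x y t a" and b: "on_geodesic x z t b"
    and t: "2 * t \<le> hdist x y + hdist x z - hdist y z"
  shows "hdist a b \<le> ln 3"
proof -
  have abH: "a \<in> hyp_space" "b \<in> hyp_space" using a b by (auto simp: on_geodesic_def)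
  have tA: "0 \<le> t" "t \<le> hdist x y" using on_geodesic_range[OF H(1,2) a] by auto
  have tB: "t \<le> hdist x z" using on_geodesic_range[OF H(1,3) b] by auto
  show ?thesis
  proof (cases "t = 0")
    case True
    hence "a = x" "b = x" using hdist_eq_0[of x a] hdist_eq_0[of x b] H abH a b
      by (auto simp: on_geodesic_def)
    thus ?thesis by (simp add: hdist_refl)
  next
    case False
    hence tp: "t > 0" using tA by simp
    define A B C where "A = hdist x y" "B = hdist x z" "C = hdist y z"
    have sAB: "sinh A > 0" "sinh B > 0" using tA tB tp by (auto simp: A_B_C_def)
    have La: "to_hyperboloid a
        = (sinh (A - t) / sinh A) *\<^sub>R to_hyperboloid x + (sinh t / sinh A) *\<^sub>R to_hyperboloid y"
      using a tA tp by (intro to_hyperboloid_between) (auto simp: H A_B_C_def on_geodesic_def)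
    have Lb: "to_hyperboloid b
        = (sinh (B - t) / sinh B) *\<^sub>R to_hyperboloid x + (sinh t / sinh B) *\<^sub>R to_hyperboloid z"
      using b tB tp by (intro to_hyperboloid_between) (auto simp: H A_B_C_def on_geodesic_def)
    have m: "mink (to_hyperboloid x) (to_hyperboloid x) = 1"
      "mink (to_hyperboloid x) (to_hyperboloid z) = cosh B"
      "mink (to_hyperboloid y) (to_hyperboloid x) = cosh A"
      "mink (to_hyperboloid y) (to_hyperboloid z) = cosh C"
      using H to_hyperboloid_on_hyperboloid cosh_hdist[of x z] cosh_hdist[of y x] cosh_hdist[of y z]
      by (auto simp: A_B_C_def hdist_sym)
    have "cosh (hdist a b)
        = (sinh (A-t) * sinh (B-t) + sinh (A-t) * sinh t * cosh B + sinh t * sinh (B-t) * cosh A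
            + sinh t * sinh t * cosh C) / (sinh A * sinh B)"
      unfolding cosh_hdist[OF abH] La Lb using m sAB by (simp add: mink_simps field_simps)
    also have "\<dots> \<le> 3/2"
      using thinness_estimate[OF tp, of A B C] tA tB t sAB hdist_nonneg[OF H(2,3)]
      by (simp add: A_B_C_def divide_le_eq)
    also have "\<dots> \<le> cosh (ln 3)" by (simp add: cosh_ln_real)
    finally show ?thesis
      using cosh_real_nonneg_le_iff[of "hdist a b" "ln 3"] hdist_nonneg[OF abH] by simp
  qed
qed

lemma geodesic_path_dist:
  assumes "geodesic_path d S \<gamma> a b" "0 \<le> s" "s \<le> d a b"
  shows "d a (\<gamma> s) = s" "d (\<gamma> s) b = d a b - s" "\<gamma> s \<in> S"
proof -
  have g: "\<gamma> 0 = a" "\<gamma> (d a b) = b" "\<gamma> ` {0..d a b} \<subseteq> S"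
    "\<forall>s\<in>{0..d a b}. \<forall>t\<in>{0..d a b}. d (\<gamma> s) (\<gamma> t) = \<bar>s - t\<bar>"
    using assms(1) unfolding geodesic_path_def by auto
  have "d (\<gamma> 0) (\<gamma> s) = \<bar>0 - s\<bar>" "d (\<gamma> s) (\<gamma> (d a b)) = \<bar>s - d a b\<bar>"
    using g(4) assms by auto
  thus "d a (\<gamma> s) = s" "d (\<gamma> s) b = d a b - s" "\<gamma> s \<in> S" using g assms by auto
qed

lemma geodesic_path_dist2:
  assumes "geodesic_path d S \<gamma> a b" "0 \<le> s" "s \<le> d a b" "0 \<le> t" "t \<le> d a b"
  shows "d (\<gamma> s) (\<gamma> t) = \<bar>s - t\<bar>"
  using assms unfolding geodesic_path_def by auto

lemma geodesic_path_initial: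
  assumes "geodesic_path d S \<gamma> a b" "0 \<le> s0" "s0 \<le> d a b"
  shows "geodesic_path d S \<gamma> a (\<gamma> s0)"
  using assms geodesic_path_dist(1)[OF assms] unfolding geodesic_path_def by auto

lemma geodesic_path_dist_from_end:
  assumes "geodesic_path d S \<gamma> a b" "0 \<le> s" "s \<le> d a b"
  shows "d b (\<gamma> s) = d a b - s"
proof -
  have end_b: "\<gamma> (d a b) = b" and iso: "\<forall>s\<in>{0..d a b}. \<forall>t\<in>{0..d a b}. d (\<gamma> s) (\<gamma> t) = \<bar>s - t\<bar>"
    using assms(1) unfolding geodesic_path_def by auto
  have "d (\<gamma> (d a b)) (\<gamma> s) = \<bar>d a b - s\<bar>" using iso assms(2,3) by simp
  thus ?thesis using end_b assms(3) by simp
qed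

lemma geodesic_path_final_reversed:
  assumes "geodesic_path d S \<gamma> a b" "0 \<le> s0" "s0 \<le> d a b"
  shows "geodesic_path d S (\<lambda>v. \<gamma> (d a b - v)) b (\<gamma> s0)"
  using assms unfolding geodesic_path_def geodesic_path_dist_from_end[OF assms]
  by (auto simp: abs_minus_commute)

lemma in_gseg: "geodesic_path d S \<gamma> a b \<Longrightarrow> 0 \<le> s \<Longrightarrow> s \<le> d a b \<Longrightarrow> \<gamma> s \<in> gseg d S a b"
  unfolding gseg_def by auto

lemma gsegE:
  assumes "y \<in> gseg d S a b"
  obtains \<gamma> s where "geodesic_path d S \<gamma> a b" "0 \<le> s" "s \<le> d a b" "y = \<gamma> s"
  using assms unfolding gseg_def by auto

lemma gseg_dist:
  assumes "y \<in> gseg d S a b"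
  shows "d a y + d y b = d a b" "0 \<le> d a y" "d a y \<le> d a b" "y \<in> S"
proof -
  obtain \<gamma> s where g: "geodesic_path d S \<gamma> a b" "0 \<le> s" "s \<le> d a b" "y = \<gamma> s"
    using gsegE[OF assms] by blast
  show "d a y + d y b = d a b" "0 \<le> d a y" "d a y \<le> d a b" "y \<in> S"
    using geodesic_path_dist[OF g(1-3)] g(2-4) by auto
qed

lemma geodesic_path_split:
  assumes "geodesic_path d S \<gamma> a b" "0 \<le> s0" "s0 \<le> d a b" "0 \<le> s" "s \<le> d a b"
  shows "\<gamma> s \<in> gseg d S a (\<gamma> s0) \<or> \<gamma> s \<in> gseg d S b (\<gamma> s0)"
proof (cases "s \<le> s0")
  case True
  thus ?thesis using in_gseg[OF geodesic_path_initial[OF assms(1-3)], of s] assms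
      geodesic_path_dist(1)[OF assms(1-3)] by simp
next
  case False
  thus ?thesis using in_gseg[OF geodesic_path_final_reversed[OF assms(1-3)], of "d a b - s"]
      geodesic_path_dist_from_end[OF assms(1-3)] assms by simp
qed

lemma gseg_commute:
  assumes "d b a = d a b"
  shows "gseg d S a b = gseg d S b a"
proof -
  have "y \<in> gseg d S b a" if y: "y \<in> gseg d S a b" and sym: "d b a = d a b" for a b y
  proof -
    obtain \<gamma> s where g: "geodesic_path d S \<gamma> a b" "0 \<le> s" "s \<le> d a b" "y = \<gamma> s"
      using gsegE[OF y] by blast
    have "geodesic_path d S (\<lambda>v. \<gamma> (d a b - v)) b a"
      using geodesic_path_final_reversed[OF g(1), of 0] g(1) g(2,3) unfolding geodesic_path_def by auto
    hence "\<gamma> (d a b - (d a b - s)) \<in> gseg d S b a"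
      using in_gseg[of d S _ b a "d a b - s"] g sym by fastforce
    thus ?thesis using g by simp
  qed
  hence "gseg d S a b \<subseteq> gseg d S b a" "gseg d S b a \<subseteq> gseg d S a b" using assms by auto
  thus ?thesis by blast
qed

lemma hseg_commute: "hseg a b = hseg b a"
  unfolding hseg_def by (rule gseg_commute) (rule hdist_sym)

lemma tree_seg_commute: "gseg dist T a b = gseg dist T b a"
  by (rule gseg_commute) (rule dist_commute)

lemma geodesic_path_on_geodesic:
  assumes "geodesic_path hdist hyp_space \<gamma> x y" "0 \<le> t" "t \<le> hdist x y"
  shows "on_geodesic x y t (\<gamma> t)"
  using geodesic_path_dist[OF assms] by (simp add: on_geodesic_def)

text \<open>By uniqueness of hyperbolic geodesics, any geodesic from \<open>x\<close> to \<open>y\<close> passes through every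
  point of \<open>[x y]\<close>; this makes distances along \<open>[x y]\<close> computable.\<close>
lemma on_geodesic_eq_path:
  assumes "geodesic_path hdist hyp_space \<gamma> x y" "x \<in> hyp_space" "y \<in> hyp_space" "on_geodesic x y t z"
  shows "z = \<gamma> t"
  using on_geodesic_unique[OF assms(2,3,4)]
    geodesic_path_on_geodesic[OF assms(1) on_geodesic_range[OF assms(2-4)]] .

lemma on_geodesic_dist:
  assumes "geodesic_path hdist hyp_space \<gamma> x y" "x \<in> hyp_space" "y \<in> hyp_space"
    "on_geodesic x y t a" "on_geodesic x y t' b"
  shows "hdist a b = \<bar>t - t'\<bar>"
  using on_geodesic_eq_path[OF assms(1-4)] on_geodesic_eq_path[OF assms(1-3,5)]
    geodesic_path_dist2[OF assms(1)] on_geodesic_range[OF assms(2,3,4)]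
    on_geodesic_range[OF assms(2,3,5)] by simp

lemma hseg_on_geodesic:
  assumes "z \<in> hseg x y"
  shows "on_geodesic x y (hdist x z) z"
  using gseg_dist[OF assms[unfolded hseg_def]] by (simp add: on_geodesic_def)

lemma on_geodesic_initial:
  assumes "x \<in> hyp_space" "y \<in> hyp_space" "on_geodesic x m t a" "on_geodesic x y s m"
  shows "on_geodesic x y t a"
proof -
  have H: "a \<in> hyp_space" "m \<in> hyp_space" using assms(3,4) by (auto simp: on_geodesic_def)
  have "hdist a y \<le> hdist a m + hdist m y" "hdist x y \<le> hdist x a + hdist a y"
    using hdist_triangle H assms(1,2) by blast+
  thus ?thesis using assms(3,4) by (auto simp: on_geodesic_def)
qed

lemma on_geodesic_in_hseg:
  assumes "geodesic_path hdist hyp_space \<gamma> x y" "x \<in> hyp_space" "y \<in> hyp_space" "on_geodesic x y t a"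
  shows "a \<in> hseg x y"
  using in_gseg[OF assms(1)] on_geodesic_range[OF assms(2-4)] on_geodesic_eq_path[OF assms]
  by (simp add: hseg_def)

section \<open>Real trees\<close>

lemma real_tree_unique_geodesic:
  assumes "real_tree T" "a \<in> T" "b \<in> T" "geodesic_path dist T \<gamma>1 a b" "geodesic_path dist T \<gamma>2 a b"
    "0 \<le> t" "t \<le> dist a b"
  shows "\<gamma>1 t = \<gamma>2 t"
  using assms unfolding real_tree_def by auto

lemma real_tree_dist_same_seg:
  assumes T: "real_tree T" "a \<in> T" "b \<in> T" and y: "y \<in> gseg dist T a b" "y' \<in> gseg dist T a b"
  shows "dist y y' = \<bar>dist a y - dist a y'\<bar>"
proof -
  obtain \<gamma> s where g: "geodesic_path dist T \<gamma> a b" "0 \<le> s" "s \<le> dist a b" "y = \<gamma> s"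
    using gsegE[OF y(1)] by blast
  obtain \<gamma>' s' where g': "geodesic_path dist T \<gamma>' a b" "0 \<le> s'" "s' \<le> dist a b" "y' = \<gamma>' s'"
    using gsegE[OF y(2)] by blast
  have "y' = \<gamma> s'" using real_tree_unique_geodesic[OF T g'(1) g(1) g'(2,3)] g' by simp
  thus ?thesis using geodesic_path_dist2[OF g(1) g(2,3) g'(2,3)] geodesic_path_dist(1)[OF g(1)] g g'
    by simp
qed

lemma real_tree_dist_two_halves:
  assumes T: "real_tree T" "a \<in> T" "c \<in> T" and m: "m \<in> gseg dist T a c"
    and y: "y \<in> gseg dist T a m" "y' \<in> gseg dist T c m"
  shows "dist y y' = (dist a m - dist a y) + (dist c m - dist c y')"
proof -
  obtain \<tau> s0 where t: "geodesic_path dist T \<tau> a c" "0 \<le> s0" "s0 \<le> dist a c" "m = \<tau> s0"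
    using gsegE[OF m] by blast
  have mT: "m \<in> T" using gseg_dist(4)[OF m] .
  have am: "dist a m = s0" "dist c m = dist a c - s0"
    using geodesic_path_dist[OF t(1-3)] t(4) by (auto simp: dist_commute)
  have r1: "geodesic_path dist T \<tau> a m" using geodesic_path_initial[OF t(1-3)] t(4) by simp
  have r2: "geodesic_path dist T (\<lambda>v. \<tau> (dist a c - v)) c m"
    using geodesic_path_final_reversed[OF t(1-3)] t(4) by simp
  obtain \<sigma> u where s: "geodesic_path dist T \<sigma> a m" "0 \<le> u" "u \<le> dist a m" "y = \<sigma> u"
    using gsegE[OF y(1)] by blast
  obtain \<sigma>' u' where s': "geodesic_path dist T \<sigma>' c m" "0 \<le> u'" "u' \<le> dist c m" "y' = \<sigma>' u'"
    using gsegE[OF y(2)] by blast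
  have yy: "y = \<tau> u" using real_tree_unique_geodesic[OF T(1,2) mT s(1) r1 s(2,3)] s by simp
  have yy': "y' = \<tau> (dist a c - u')"
    using real_tree_unique_geodesic[OF T(1,3) mT s'(1) r2 s'(2,3)] s' by simp
  have "dist y y' = \<bar>u - (dist a c - u')\<bar>"
    unfolding yy yy' using s s' am by (intro geodesic_path_dist2[OF t(1)]) auto
  moreover have "dist a y = u" "dist c y' = u'"
    using geodesic_path_dist(1)[OF s(1-3)] geodesic_path_dist(1)[OF s'(1-3)] s s' by auto
  ultimately show ?thesis using s s' am by simp
qed

lemma real_tree_seg_split:
  assumes T: "real_tree T" "a \<in> T" "c \<in> T" and m: "m \<in> gseg dist T a c"
    and y: "y \<in> gseg dist T a c"
  shows "y \<in> gseg dist T a m \<or> y \<in> gseg dist T c m"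
proof -
  obtain \<tau> s0 where t: "geodesic_path dist T \<tau> a c" "0 \<le> s0" "s0 \<le> dist a c" "m = \<tau> s0"
    using gsegE[OF m] by blast
  obtain \<sigma> s where s: "geodesic_path dist T \<sigma> a c" "0 \<le> s" "s \<le> dist a c" "y = \<sigma> s"
    using gsegE[OF y] by blast
  have "y = \<tau> s" using real_tree_unique_geodesic[OF T s(1) t(1) s(2,3)] s by simp
  thus ?thesis using geodesic_path_split[OF t(1-3) s(2,3)] t(4) by simp
qed

lemma real_tree_subseg:
  assumes T: "real_tree T" "a \<in> T" and m: "m \<in> gseg dist T a c" and y: "y \<in> gseg dist T a m"
  shows "y \<in> gseg dist T a c"
proof -
  obtain \<tau> s0 where t: "geodesic_path dist T \<tau> a c" "0 \<le> s0" "s0 \<le> dist a c" "m = \<tau> s0"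
    using gsegE[OF m] by blast
  obtain \<sigma> u where s: "geodesic_path dist T \<sigma> a m" "0 \<le> u" "u \<le> dist a m" "y = \<sigma> u"
    using gsegE[OF y] by blast
  have am: "dist a m = s0" using geodesic_path_dist(1)[OF t(1-3)] t(4) by simp
  have "y = \<tau> u"
    using real_tree_unique_geodesic[OF T gseg_dist(4)[OF m] s(1)] geodesic_path_initial[OF t(1-3)] s t(4)
    by simp
  thus ?thesis using in_gseg[OF t(1), of u] s am t(3) by simp
qed

text \<open>A surjection distorting distances by at most an additive constant \<open>A\<close> is a
  \<open>(1, A)\<close>-quasi-isometry: a right inverse serves as quasi-inverse.\<close>
lemma quasi_isometry_of_additive_distortion:
  fixes f :: "'a \<Rightarrow> 'b::metric_space"
  assumes onto: "f ` X = Y"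
    and distortion: "\<And>a b. a \<in> X \<Longrightarrow> b \<in> X \<Longrightarrow> \<bar>dX a b - dist (f a) (f b)\<bar> \<le> A"
  shows "quasi_isometry dX X dist Y f 1 A"
proof -
  define g where "g y = (SOME a. a \<in> X \<and> f a = y)" for y
  have g: "g y \<in> X" "f (g y) = y" if "y \<in> Y" for y
    using someI_ex[of "\<lambda>a. a \<in> X \<and> f a = y"] that onto by (auto simp: g_def)
  have A: "0 \<le> A" if "y \<in> Y" for y
    using distortion[OF g(1) g(1), OF that that] by simp
  show ?thesis
    unfolding quasi_isometry_def
  proof (intro conjI ballI exI[of _ g])
    fix a b assume "a \<in> X" "b \<in> X"
    thus "- A + dX a b / 1 \<le> dist (f a) (f b)" "dist (f a) (f b) \<le> 1 * dX a b + A"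
      using distortion[of a b] by (auto simp: abs_le_iff)
  next
    fix y y' assume "y \<in> Y" "y' \<in> Y"
    thus "- A + dist y y' / 1 \<le> dX (g y) (g y')" "dX (g y) (g y') \<le> 1 * dist y y' + A"
      using distortion[of "g y" "g y'"] g by (auto simp: abs_le_iff)
  next
    fix a assume "a \<in> X"
    thus "dX a (g (f a)) \<le> A" using distortion[of a "g (f a)"] g[of "f a"] onto by auto
  next
    fix y assume "y \<in> Y"
    thus "dist y (f (g y)) \<le> A" using g A by simp
  qed (use onto g in auto)
qed

text \<open>Rescaling \<open>[0, g]\<close> onto \<open>[0, D]\<close> changes distances by at most \<open>|D - g|\<close>, both between
  two points and to the far endpoint (if \<open>g = 0\<close> the rescaling is the zero map, and \<open>D = 0\<close>).\<close>
lemma dilation_distortion: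
  fixes t t' g D :: real
  assumes "0 \<le> t" "t \<le> g" "0 \<le> t'" "t' \<le> g" "g = 0 \<Longrightarrow> D = 0"
  shows "\<bar>\<bar>D / g * t - D / g * t'\<bar> - \<bar>t - t'\<bar>\<bar> \<le> \<bar>D - g\<bar>"
proof (cases "g = 0")
  case True thus ?thesis using assms by simp
next
  case False
  hence gp: "g > 0" using assms by simp
  have "\<bar>\<bar>D / g * t - D / g * t'\<bar> - \<bar>t - t'\<bar>\<bar> \<le> \<bar>(D / g * t - D / g * t') - (t - t')\<bar>" by simp
  also have "\<dots> = \<bar>D - g\<bar> * \<bar>(t - t') / g\<bar>" using gp by (simp add: field_simps abs_mult[symmetric])
  also have "\<dots> \<le> \<bar>D - g\<bar>"
    using gp assms mult_left_mono[of "\<bar>(t - t') / g\<bar>" 1 "\<bar>D - g\<bar>"] by (auto simp: abs_le_iff divide_le_eq)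
  finally show ?thesis .
qed

lemma dilation_distortion_endpoint:
  fixes t g D :: real
  assumes "0 \<le> t" "t \<le> g" "g = 0 \<Longrightarrow> D = 0"
  shows "\<bar>(D - D / g * t) - (g - t)\<bar> \<le> \<bar>D - g\<bar>"
proof (cases "g = 0")
  case True thus ?thesis using assms by simp
next
  case False
  hence gp: "g > 0" using assms by simp
  have "\<bar>(D - D / g * t) - (g - t)\<bar> = \<bar>D - g\<bar> * \<bar>1 - t / g\<bar>"
    using gp by (simp add: field_simps abs_mult[symmetric])
  also have "\<dots> \<le> \<bar>D - g\<bar>"
    using gp assms mult_left_mono[of "\<bar>1 - t / g\<bar>" 1 "\<bar>D - g\<bar>"] by (auto simp: abs_le_iff divide_le_eq)
  finally show ?thesis .
qed

section \<open>Comparing a geodesic triangle with its tripod\<close>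

text \<open>The Gromov product \<open>(y|z)\<^sub>x\<close>: the distance from the vertex \<open>x\<close> to the internal points of
  the triangle \<open>x y z\<close>.\<close>
definition gromov_product :: "real^'n \<Rightarrow> real^'n \<Rightarrow> real^'n \<Rightarrow> real" where
  "gromov_product x y z = (hdist x y + hdist x z - hdist y z) / 2"

text \<open>The data of the theorem, with the three vertices indexed by a three-element set \<open>I\<close>:
  vertices \<open>x\<^sub>i\<close>, internal points \<open>o\<^sub>i\<^sub>j = o\<^sub>j\<^sub>i \<in> [x\<^sub>i x\<^sub>j]\<close> at distance \<open>g\<^sub>i = (x\<^sub>j|x\<^sub>k)\<^sub>x\<^sub>i\<close>
  from \<open>x\<^sub>i\<close>, tree points \<open>p\<^sub>i\<close> approximating the vertex distances up to \<open>E\<close>, a branch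
  point \<open>o\<close> on all three tree segments, and the map \<open>p\<^sub>\<Delta>\<close> which dilates each leg
  \<open>[x\<^sub>i o\<^sub>i\<^sub>j]\<close> onto \<open>[p\<^sub>i o]\<close>.\<close>
locale triangle_to_tripod =
  fixes I :: "'i set"
    and xs :: "'i \<Rightarrow> real^'n" and os :: "'i \<Rightarrow> 'i \<Rightarrow> real^'n" and g :: "'i \<Rightarrow> real"
    and T :: "'b::metric_space set" and ps :: "'i \<Rightarrow> 'b" and ob :: 'b
    and pD :: "real^'n \<Rightarrow> 'b" and E :: real
  assumes three: "card I = 3"
    and vertex_in: "\<And>i. i \<in> I \<Longrightarrow> xs i \<in> hyp_space"
    and tree: "real_tree T"
    and tree_vertex_in: "\<And>i. i \<in> I \<Longrightarrow> ps i \<in> T"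
    and approx: "\<And>i j. i \<in> I \<Longrightarrow> j \<in> I \<Longrightarrow>
        hdist (xs i) (xs j) - E \<le> dist (ps i) (ps j) \<and> dist (ps i) (ps j) \<le> hdist (xs i) (xs j)"
    and g_gromov: "\<And>i j k. i \<in> I \<Longrightarrow> j \<in> I \<Longrightarrow> k \<in> I \<Longrightarrow> i \<noteq> j \<Longrightarrow> i \<noteq> k \<Longrightarrow> j \<noteq> k \<Longrightarrow>
        g i = gromov_product (xs i) (xs j) (xs k)"
    and internal_in: "\<And>i j. i \<in> I \<Longrightarrow> j \<in> I \<Longrightarrow> i \<noteq> j \<Longrightarrow> os i j \<in> hseg (xs i) (xs j)"
    and internal_commute: "\<And>i j. i \<in> I \<Longrightarrow> j \<in> I \<Longrightarrow> i \<noteq> j \<Longrightarrow> os j i = os i j"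
    and internal_dist: "\<And>i j. i \<in> I \<Longrightarrow> j \<in> I \<Longrightarrow> i \<noteq> j \<Longrightarrow> hdist (xs i) (os i j) = g i"
    and branch_in: "\<And>i j. i \<in> I \<Longrightarrow> j \<in> I \<Longrightarrow> i \<noteq> j \<Longrightarrow> ob \<in> gseg dist T (ps i) (ps j)"
    and pD_vertex: "\<And>i. i \<in> I \<Longrightarrow> pD (xs i) = ps i"
    and pD_internal: "\<And>i j. i \<in> I \<Longrightarrow> j \<in> I \<Longrightarrow> i \<noteq> j \<Longrightarrow> pD (os i j) = ob"
    and pD_dilation: "\<And>i j. i \<in> I \<Longrightarrow> j \<in> I \<Longrightarrow> i \<noteq> j \<Longrightarrow>
        dilation_on_seg pD T (xs i) (os i j) (ps i) ob"
begin

definition triangle_set :: "(real^'n) set" where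
  "triangle_set = (\<Union>i\<in>I. \<Union>j\<in>I - {i}. hseg (xs i) (xs j))"

definition tripod_set :: "'b set" where
  "tripod_set = (\<Union>i\<in>I. \<Union>j\<in>I - {i}. gseg dist T (ps i) (ps j))"

definition leg :: "'i \<Rightarrow> 'i \<Rightarrow> (real^'n) set" where
  "leg i j = hseg (xs i) (os i j)"

definition tree_leg :: "'i \<Rightarrow> real" where
  "tree_leg i = dist (ps i) ob"

lemma some_index: obtains i where "i \<in> I"
proof -
  have "I \<noteq> {}" using three by (intro notI) simp
  thus ?thesis using that by blast
qed

lemma other_index:
  assumes "i \<in> I" obtains j where "j \<in> I" "j \<noteq> i"
proof -
  have "card (I - {i}) = 2" using three assms by simp
  hence "I - {i} \<noteq> {}" by (intro notI) simp
  thus ?thesis using that by blast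
qed

lemma third_index:
  assumes "i \<in> I" "j \<in> I" obtains k where "k \<in> I" "k \<noteq> i" "k \<noteq> j"
proof -
  have "card (I - {i}) = 2" using three assms by simp
  hence "card (I - {i} - {j}) \<ge> 1" by (simp add: card_Diff_singleton_if)
  hence "I - {i} - {j} \<noteq> {}" by (intro notI) simp
  thus ?thesis using that by blast
qed

lemma E_nonneg: "0 \<le> E"
proof -
  obtain i where "i \<in> I" using some_index by blast
  thus ?thesis using approx[of i i] by (simp add: hdist_refl)
qed

lemma g_add:
  assumes "i \<in> I" "j \<in> I" "i \<noteq> j"
  shows "g i + g j = hdist (xs i) (xs j)"
proof -
  obtain k where k: "k \<in> I" "k \<noteq> i" "k \<noteq> j" using third_index assms(1,2) by blast
  show ?thesis using g_gromov[of i j k] g_gromov[of j i k] assms k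
    by (simp add: gromov_product_def hdist_sym[of "xs j" "xs i"])
qed

lemma g_nonneg: assumes "i \<in> I" shows "0 \<le> g i"
proof -
  obtain j where j: "j \<in> I" "j \<noteq> i" using other_index assms by blast
  have "os i j \<in> hyp_space"
    using gseg_dist(4)[of "os i j" hdist] internal_in[OF assms j(1)] j by (simp add: hseg_def)
  hence "0 \<le> hdist (xs i) (os i j)" by (rule hdist_nonneg[OF vertex_in[OF assms]])
  thus ?thesis using internal_dist[OF assms j(1)] j by simp
qed

lemma g_le_side: "i \<in> I \<Longrightarrow> j \<in> I \<Longrightarrow> i \<noteq> j \<Longrightarrow> g i \<le> hdist (xs i) (xs j)"
  using g_add[of i j] g_nonneg[of j] by linarith

text \<open>The bound \<open>2 g\<^sub>i \<le> d(x\<^sub>i,x\<^sub>j) + d(x\<^sub>i,x\<^sub>l) - d(x\<^sub>j,x\<^sub>l)\<close> needed for thinness, also for \<open>j = l\<close>.\<close>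
lemma twice_g_le:
  assumes "i \<in> I" "j \<in> I" "l \<in> I" "i \<noteq> j" "i \<noteq> l"
  shows "2 * g i \<le> hdist (xs i) (xs j) + hdist (xs i) (xs l) - hdist (xs j) (xs l)"
proof (cases "j = l")
  case True
  thus ?thesis using g_le_side[of i j] assms by (simp add: hdist_refl)
next
  case False
  thus ?thesis using g_gromov[of i j l] assms by (simp add: gromov_product_def)
qed

lemma internal_geodesic:
  assumes "i \<in> I" "j \<in> I" "i \<noteq> j"
  obtains \<gamma> where "geodesic_path hdist hyp_space \<gamma> (xs i) (xs j)" "\<gamma> (g i) = os i j"
proof -
  have "os i j \<in> gseg hdist hyp_space (xs i) (xs j)" using internal_in[OF assms] by (simp add: hseg_def)
  then obtain \<gamma> s where \<gamma>: "geodesic_path hdist hyp_space \<gamma> (xs i) (xs j)" "0 \<le> s"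
      "s \<le> hdist (xs i) (xs j)" "os i j = \<gamma> s"
    by (rule gsegE)
  have "s = g i" using geodesic_path_dist(1)[OF \<gamma>(1-3)] \<gamma>(4) internal_dist[OF assms] by simp
  thus ?thesis using \<gamma>(4) by (intro that[OF \<gamma>(1)]) simp
qed

lemma internal_on_geodesic:
  assumes "i \<in> I" "j \<in> I" "i \<noteq> j"
  shows "on_geodesic (xs i) (xs j) (g i) (os i j)"
proof -
  obtain \<gamma> where \<gamma>: "geodesic_path hdist hyp_space \<gamma> (xs i) (xs j)" "\<gamma> (g i) = os i j"
    using internal_geodesic[OF assms] by blast
  show ?thesis using geodesic_path_on_geodesic[OF \<gamma>(1) g_nonneg[OF assms(1)] g_le_side[OF assms]] \<gamma>(2)
    by simp
qed

lemma leg_on_side: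
  assumes "i \<in> I" "j \<in> I" "i \<noteq> j" "a \<in> leg i j"
  shows "on_geodesic (xs i) (xs j) (hdist (xs i) a) a" "hdist (xs i) a \<le> g i"
proof -
  have a: "on_geodesic (xs i) (os i j) (hdist (xs i) a) a"
    using hseg_on_geodesic assms(4) by (simp add: leg_def)
  show "on_geodesic (xs i) (xs j) (hdist (xs i) a) a"
    by (rule on_geodesic_initial[OF vertex_in vertex_in a internal_on_geodesic]) (use assms in auto)
  show "hdist (xs i) a \<le> g i"
    using gseg_dist(3)[of a hdist hyp_space "xs i" "os i j"] assms(4) internal_dist[OF assms(1-3)]
    by (simp add: leg_def hseg_def)
qed

lemma leg_subset_triangle:
  assumes "i \<in> I" "j \<in> I" "i \<noteq> j"
  shows "leg i j \<subseteq> triangle_set"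
proof
  fix a assume "a \<in> leg i j"
  obtain \<gamma> where \<gamma>: "geodesic_path hdist hyp_space \<gamma> (xs i) (xs j)"
    using internal_geodesic[OF assms] by blast
  have "a \<in> hseg (xs i) (xs j)"
    by (rule on_geodesic_in_hseg[OF \<gamma> vertex_in vertex_in leg_on_side(1)])
      (use assms \<open>a \<in> leg i j\<close> in simp_all)
  thus "a \<in> triangle_set" using assms by (auto simp: triangle_set_def)
qed

lemma triangle_legs:
  assumes "a \<in> triangle_set"
  obtains i j where "i \<in> I" "j \<in> I" "i \<noteq> j" "a \<in> leg i j"
proof -
  obtain i j where ij: "i \<in> I" "j \<in> I" "i \<noteq> j" and a: "a \<in> hseg (xs i) (xs j)"
    using assms unfolding triangle_set_def by blast
  obtain \<gamma> where \<gamma>: "geodesic_path hdist hyp_space \<gamma> (xs i) (xs j)" "\<gamma> (g i) = os i j"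
    using internal_geodesic[OF ij] by blast
  have "a = \<gamma> (hdist (xs i) a)"
    using on_geodesic_eq_path[OF \<gamma>(1) vertex_in vertex_in hseg_on_geodesic[OF a]] ij by simp
  moreover have "0 \<le> hdist (xs i) a" "hdist (xs i) a \<le> hdist (xs i) (xs j)"
    using gseg_dist[OF a[unfolded hseg_def]] by auto
  ultimately have "a \<in> gseg hdist hyp_space (xs i) (os i j) \<or> a \<in> gseg hdist hyp_space (xs j) (os i j)"
    using geodesic_path_split[OF \<gamma>(1) g_nonneg[OF ij(1)] g_le_side[OF ij]] \<gamma>(2) by metis
  hence "a \<in> leg i j \<or> a \<in> leg j i" using internal_commute[OF ij] by (simp add: leg_def hseg_def)
  thus ?thesis using that ij by blast
qed

lemma leg_near_side:
  assumes "i \<in> I" "j \<in> I" "l \<in> I" "i \<noteq> j" "i \<noteq> l" "a \<in> leg i j"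
  obtains a' where "on_geodesic (xs i) (xs l) (hdist (xs i) a) a'" "hdist a a' \<le> ln 3"
proof -
  define t where "t = hdist (xs i) a"
  have a: "on_geodesic (xs i) (xs j) t a" "t \<le> g i" using leg_on_side assms by (auto simp: t_def)
  obtain \<gamma> where \<gamma>: "geodesic_path hdist hyp_space \<gamma> (xs i) (xs l)"
    using internal_geodesic[of i l] assms by blast
  have t: "0 \<le> t" "t \<le> hdist (xs i) (xs l)"
    using on_geodesic_range[OF vertex_in vertex_in a(1)] a(2) g_le_side[of i l] assms by auto
  have a': "on_geodesic (xs i) (xs l) t (\<gamma> t)" using geodesic_path_on_geodesic[OF \<gamma> t] .
  have "2 * t \<le> hdist (xs i) (xs j) + hdist (xs i) (xs l) - hdist (xs j) (xs l)"
    using twice_g_le[of i j l] a(2) assms by linarith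
  hence "hdist a (\<gamma> t) \<le> ln 3"
    using hyperbolic_triangle_thin[OF vertex_in vertex_in vertex_in a(1) a'] assms by blast
  thus ?thesis using that a' by (simp add: t_def)
qed

lemma branch_in_T: "ob \<in> T"
proof -
  obtain i where i: "i \<in> I" using some_index by blast
  then obtain j where j: "j \<in> I" "j \<noteq> i" using other_index by blast
  have "ob \<in> gseg dist T (ps i) (ps j)" using branch_in[OF i j(1)] j by simp
  thus ?thesis by (rule gseg_dist(4))
qed

lemma tree_leg_add:
  assumes "i \<in> I" "j \<in> I" "i \<noteq> j"
  shows "tree_leg i + tree_leg j = dist (ps i) (ps j)"
  using gseg_dist(1)[OF branch_in[OF assms]] by (simp add: tree_leg_def dist_commute)

text \<open>The tree legs have the lengths of the triangle legs up to \<open>E\<close>: the three differences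
  \<open>tree_leg i - g i\<close> are pairwise sums in \<open>[-E, 0]\<close>.\<close>
lemma tree_leg_close:
  assumes "i \<in> I" shows "\<bar>tree_leg i - g i\<bar> \<le> E"
proof -
  obtain j where j: "j \<in> I" "j \<noteq> i" using other_index assms by blast
  obtain k where k: "k \<in> I" "k \<noteq> i" "k \<noteq> j" using third_index[OF assms j(1)] by blast
  have pair: "-E \<le> (tree_leg a - g a) + (tree_leg b - g b) \<and> (tree_leg a - g a) + (tree_leg b - g b) \<le> 0"
    if "a \<in> I" "b \<in> I" "a \<noteq> b" for a b
    using tree_leg_add[OF that] g_add[OF that] approx[OF that(1,2)] by linarith
  have "-E \<le> (tree_leg i - g i) + (tree_leg j - g j)" "(tree_leg i - g i) + (tree_leg j - g j) \<le> 0"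
    "-E \<le> (tree_leg i - g i) + (tree_leg k - g k)" "(tree_leg i - g i) + (tree_leg k - g k) \<le> 0"
    "-E \<le> (tree_leg j - g j) + (tree_leg k - g k)" "(tree_leg j - g j) + (tree_leg k - g k) \<le> 0"
    using pair[of i j] pair[of i k] pair[of j k] assms j k by auto
  thus ?thesis unfolding abs_le_iff by linarith
qed

text \<open>A degenerate triangle leg (\<open>g\<^sub>i = 0\<close>) has a degenerate tree leg, so the dilation
  factor \<open>tree_leg i / g i\<close> (which is \<open>0\<close> then) is harmless.\<close>
lemma tree_leg_zero:
  assumes "i \<in> I" "g i = 0" shows "tree_leg i = 0"
proof -
  obtain j where j: "j \<in> I" "j \<noteq> i" using other_index assms by blast
  have "os i j \<in> hyp_space"
    using gseg_dist(4)[of "os i j" hdist] internal_in[OF assms(1) j(1)] j by (simp add: hseg_def)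
  hence "xs i = os i j"
    using hdist_eq_0[OF vertex_in[OF assms(1)]] internal_dist[OF assms(1) j(1)] assms(2) j by simp
  hence "ps i = ob" using pD_vertex[OF assms(1)] pD_internal[OF assms(1) j(1)] j by simp
  thus ?thesis by (simp add: tree_leg_def)
qed

lemma leg_image:
  assumes "i \<in> I" "j \<in> I" "i \<noteq> j" "a \<in> leg i j"
  shows "pD a \<in> gseg dist T (ps i) ob" "dist (ps i) (pD a) = tree_leg i / g i * hdist (xs i) a"
proof -
  have "pD a \<in> gseg dist T (ps i) ob \<and>
      dist (ps i) (pD a) = dist (ps i) ob / hdist (xs i) (os i j) * hdist (xs i) a"
    using pD_dilation[OF assms(1-3)] assms(4) unfolding dilation_on_seg_def leg_def by blast
  thus "pD a \<in> gseg dist T (ps i) ob" "dist (ps i) (pD a) = tree_leg i / g i * hdist (xs i) a"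
    using internal_dist[OF assms(1-3)] by (simp_all add: tree_leg_def)
qed

lemma tree_leg_covered:
  assumes "i \<in> I" "j \<in> I" "i \<noteq> j" "y \<in> gseg dist T (ps i) ob"
  shows "y \<in> pD ` leg i j"
proof -
  obtain \<gamma> where \<gamma>: "geodesic_path hdist hyp_space \<gamma> (xs i) (xs j)" "\<gamma> (g i) = os i j"
    using internal_geodesic[OF assms(1-3)] by blast
  have g0: "0 \<le> g i" "g i \<le> hdist (xs i) (xs j)" using g_nonneg g_le_side assms by auto
  have y: "0 \<le> dist (ps i) y" "dist (ps i) y \<le> tree_leg i"
    using gseg_dist[OF assms(4)] by (auto simp: tree_leg_def)
  define s where "s = (if tree_leg i = 0 then 0 else dist (ps i) y * g i / tree_leg i)"
  have "0 \<le> s \<and> s \<le> g i"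
  proof (cases "tree_leg i = 0")
    case True
    thus ?thesis using g0 by (simp add: s_def)
  next
    case False
    hence pos: "tree_leg i > 0" using y by linarith
    have "dist (ps i) y * g i \<le> tree_leg i * g i" using y g0 by (simp add: mult_right_mono)
    thus ?thesis using y g0 pos False by (simp add: s_def pos_divide_le_eq[OF pos] mult.commute)
  qed
  hence s: "0 \<le> s" "s \<le> g i" by auto
  have "\<gamma> s \<in> gseg hdist hyp_space (xs i) (\<gamma> (g i))"
    using in_gseg[OF geodesic_path_initial[OF \<gamma>(1) g0], of s] s geodesic_path_dist(1)[OF \<gamma>(1) g0]
    by simp
  hence a: "\<gamma> s \<in> leg i j" using \<gamma>(2) by (simp add: leg_def hseg_def)
  have "hdist (xs i) (\<gamma> s) = s" using geodesic_path_dist(1)[OF \<gamma>(1)] s g0 by simp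
  hence "dist (ps i) (pD (\<gamma> s)) = dist (ps i) y"
    using leg_image(2)[OF assms(1-3) a] tree_leg_zero[OF assms(1)] y by (auto simp: s_def)
  hence "pD (\<gamma> s) = y"
    using real_tree_dist_same_seg[OF tree tree_vertex_in branch_in_T leg_image(1)[OF assms(1-3) a]
        assms(4)] assms(1) by simp
  thus ?thesis using a by blast
qed

text \<open>Two points on legs at the same vertex \<open>x\<^sub>i\<close>: in the triangle (by thinness) and in the
  tree (by the dilation) their distance is \<open>|t - t'|\<close> up to \<open>\<delta>\<close> resp. \<open>E\<close>, where \<open>t, t'\<close> are
  their distances from \<open>x\<^sub>i\<close>.\<close>
lemma distortion_same_vertex:
  assumes "i \<in> I" "j \<in> I" "l \<in> I" "i \<noteq> j" "i \<noteq> l" "a \<in> leg i j" "b \<in> leg i l"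
  shows "\<bar>hdist a b - dist (pD a) (pD b)\<bar> \<le> E + ln 3"
proof -
  define t t' where "t = hdist (xs i) a" "t' = hdist (xs i) b"
  have a: "on_geodesic (xs i) (xs j) t a" "t \<le> g i"
    using leg_on_side[OF assms(1,2,4,6)] by (auto simp: t_t'_def)
  have b: "on_geodesic (xs i) (xs l) t' b" "t' \<le> g i"
    using leg_on_side[OF assms(1,3,5,7)] by (auto simp: t_t'_def)
  obtain a' where a': "on_geodesic (xs i) (xs l) t a'" "hdist a a' \<le> ln 3"
    using leg_near_side[OF assms(1-6)] unfolding t_t'_def by blast
  obtain \<gamma> where \<gamma>: "geodesic_path hdist hyp_space \<gamma> (xs i) (xs l)"
    using internal_geodesic[OF assms(1,3,5)] by blast
  have H: "a \<in> hyp_space" "a' \<in> hyp_space" "b \<in> hyp_space"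
    using a(1) a'(1) b(1) by (auto simp: on_geodesic_def)
  have t: "0 \<le> t" "0 \<le> t'"
    using on_geodesic_range(1)[OF vertex_in vertex_in a(1)] on_geodesic_range(1)[OF vertex_in vertex_in b(1)]
      assms by auto
  have "hdist a' b = \<bar>t - t'\<bar>"
    using on_geodesic_dist[OF \<gamma> vertex_in vertex_in a'(1) b(1)] assms by simp
  moreover have "hdist a b \<le> hdist a a' + hdist a' b" "hdist a' b \<le> hdist a' a + hdist a b"
    using hdist_triangle H by blast+
  ultimately have hyp: "\<bar>hdist a b - \<bar>t - t'\<bar>\<bar> \<le> ln 3"
    using a'(2) hdist_sym[of a' a] by linarith
  have "dist (pD a) (pD b) = \<bar>tree_leg i / g i * t - tree_leg i / g i * t'\<bar>"
    using real_tree_dist_same_seg[OF tree tree_vertex_in branch_in_T leg_image(1)[OF assms(1,2,4,6)]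
        leg_image(1)[OF assms(1,3,5,7)]] leg_image(2)[OF assms(1,2,4,6)] leg_image(2)[OF assms(1,3,5,7)]
      assms(1) by (simp add: t_t'_def)
  moreover have "\<bar>\<bar>tree_leg i / g i * t - tree_leg i / g i * t'\<bar> - \<bar>t - t'\<bar>\<bar> \<le> \<bar>tree_leg i - g i\<bar>"
    using dilation_distortion[of t "g i" t' "tree_leg i"] a(2) b(2) t tree_leg_zero[OF assms(1)] by simp
  ultimately show ?thesis using hyp tree_leg_close[OF assms(1)] by linarith
qed

text \<open>Two points on legs at different vertices \<open>x\<^sub>i, x\<^sub>k\<close>: both distances are the sum of the
  remaining leg lengths, up to \<open>2\<delta>\<close> (thinness at both ends) resp. \<open>2E\<close>.\<close>
lemma distortion_distinct_vertices:
  assumes "i \<in> I" "j \<in> I" "k \<in> I" "l \<in> I" "i \<noteq> j" "k \<noteq> l" "i \<noteq> k"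
    and "a \<in> leg i j" "b \<in> leg k l"
  shows "\<bar>hdist a b - dist (pD a) (pD b)\<bar> \<le> 2 * E + 2 * ln 3"
proof -
  define t t' where "t = hdist (xs i) a" "t' = hdist (xs k) b"
  have a: "on_geodesic (xs i) (xs j) t a" "t \<le> g i"
    using leg_on_side[OF assms(1,2,5,8)] by (auto simp: t_t'_def)
  have b: "on_geodesic (xs k) (xs l) t' b" "t' \<le> g k"
    using leg_on_side[OF assms(3,4,6,9)] by (auto simp: t_t'_def)
  obtain a' where a': "on_geodesic (xs i) (xs k) t a'" "hdist a a' \<le> ln 3"
    using leg_near_side[OF assms(1,2,3,5,7,8)] unfolding t_t'_def by blast
  obtain b' where b': "on_geodesic (xs k) (xs i) t' b'" "hdist b b' \<le> ln 3"
    using leg_near_side[OF assms(3,4,1,6) _ assms(9)] assms(7) unfolding t_t'_def by blast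
  obtain \<gamma> where \<gamma>: "geodesic_path hdist hyp_space \<gamma> (xs i) (xs k)"
    using internal_geodesic[OF assms(1,3,7)] by blast
  have H: "a \<in> hyp_space" "a' \<in> hyp_space" "b \<in> hyp_space" "b' \<in> hyp_space"
    using a(1) a'(1) b(1) b'(1) by (auto simp: on_geodesic_def)
  have t: "0 \<le> t" "0 \<le> t'"
    using on_geodesic_range(1)[OF vertex_in vertex_in a(1)] on_geodesic_range(1)[OF vertex_in vertex_in b(1)]
      assms by auto
  have "hdist a' b' = \<bar>t - (hdist (xs k) (xs i) - t')\<bar>"
    using on_geodesic_dist[OF \<gamma> vertex_in vertex_in a'(1) on_geodesic_swap[OF b'(1)]] assms by simp
  also have "\<dots> = (g i - t) + (g k - t')"
    using g_add[OF assms(3,1)] assms(7) a(2) b(2) by auto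
  finally have "hdist a' b' = (g i - t) + (g k - t')" .
  moreover have "hdist a b \<le> hdist a a' + hdist a' b" "hdist a' b \<le> hdist a' b' + hdist b' b"
      "hdist a' b' \<le> hdist a' a + hdist a b'" "hdist a b' \<le> hdist a b + hdist b b'"
    using hdist_triangle H by blast+
  ultimately have hyp: "\<bar>hdist a b - ((g i - t) + (g k - t'))\<bar> \<le> 2 * ln 3"
    using a'(2) b'(2) hdist_sym[of a' a] hdist_sym[of b' b] by linarith
  have "dist (pD a) (pD b) = (tree_leg i - tree_leg i / g i * t) + (tree_leg k - tree_leg k / g k * t')"
    using real_tree_dist_two_halves[OF tree tree_vertex_in tree_vertex_in branch_in[OF assms(1,3,7)]
        leg_image(1)[OF assms(1,2,5,8)] leg_image(1)[OF assms(3,4,6,9)]]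
      leg_image(2)[OF assms(1,2,5,8)] leg_image(2)[OF assms(3,4,6,9)] assms(1,3)
    by (simp add: t_t'_def tree_leg_def)
  moreover have "\<bar>(tree_leg i - tree_leg i / g i * t) - (g i - t)\<bar> \<le> \<bar>tree_leg i - g i\<bar>"
    using dilation_distortion_endpoint[of t "g i" "tree_leg i"] a(2) t tree_leg_zero[OF assms(1)] by simp
  moreover have "\<bar>(tree_leg k - tree_leg k / g k * t') - (g k - t')\<bar> \<le> \<bar>tree_leg k - g k\<bar>"
    using dilation_distortion_endpoint[of t' "g k" "tree_leg k"] b(2) t tree_leg_zero[OF assms(3)] by simp
  ultimately show ?thesis using hyp tree_leg_close[OF assms(1)] tree_leg_close[OF assms(3)] by linarith
qed

lemma distortion:
  assumes "a \<in> triangle_set" "b \<in> triangle_set"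
  shows "\<bar>hdist a b - dist (pD a) (pD b)\<bar> \<le> 2 * E + 2 * ln 3"
proof -
  obtain i j where a: "i \<in> I" "j \<in> I" "i \<noteq> j" "a \<in> leg i j" using triangle_legs[OF assms(1)] .
  obtain k l where b: "k \<in> I" "l \<in> I" "k \<noteq> l" "b \<in> leg k l" using triangle_legs[OF assms(2)] .
  show ?thesis
  proof (cases "i = k")
    case True
    thus ?thesis using distortion_same_vertex[of i j l a b] a b E_nonneg by fastforce
  next
    case False
    show ?thesis by (rule distortion_distinct_vertices[OF a(1,2) b(1,2) a(3) b(3) False a(4) b(4)])
  qed
qed

lemma image_triangle: "pD ` triangle_set = tripod_set"
proof
  show "pD ` triangle_set \<subseteq> tripod_set"
  proof
    fix y assume "y \<in> pD ` triangle_set"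
    then obtain a where "a \<in> triangle_set" and y_eq: "y = pD a" by blast
    then obtain i j where ij: "i \<in> I" "j \<in> I" "i \<noteq> j" and a: "a \<in> leg i j"
      using triangle_legs by blast
    have "y \<in> gseg dist T (ps i) (ps j)"
      using real_tree_subseg[OF tree tree_vertex_in[OF ij(1)] branch_in[OF ij] leg_image(1)[OF ij a]]
        y_eq by simp
    thus "y \<in> tripod_set" using ij by (auto simp: tripod_set_def)
  qed
next
  show "tripod_set \<subseteq> pD ` triangle_set"
  proof
    fix y assume "y \<in> tripod_set"
    then obtain i j where ij: "i \<in> I" "j \<in> I" "i \<noteq> j" and y: "y \<in> gseg dist T (ps i) (ps j)"
      unfolding tripod_set_def by blast
    have "y \<in> gseg dist T (ps i) ob \<or> y \<in> gseg dist T (ps j) ob"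
      using real_tree_seg_split[OF tree tree_vertex_in tree_vertex_in branch_in[OF ij] y] ij by simp
    hence "y \<in> pD ` leg i j \<or> y \<in> pD ` leg j i"
      using tree_leg_covered[OF ij] tree_leg_covered[OF ij(2,1)] ij(3) by auto
    thus "y \<in> pD ` triangle_set" using leg_subset_triangle[OF ij] leg_subset_triangle[OF ij(2,1)] ij(3)
      by blast
  qed
qed

theorem quasi_isometry: "quasi_isometry hdist triangle_set dist tripod_set pD 1 (2 * E + 2 * ln 3)"
  using quasi_isometry_of_additive_distortion[OF image_triangle distortion] .

end

lemma gromov_product_commute: "gromov_product x y z = gromov_product x z y"
  by (simp add: gromov_product_def hdist_sym)

text \<open>Indexing the vertices of a triangle by \<open>{0, 1, 2}\<close>, and its internal points by the
  unordered pairs \<open>{0, 1}\<close>, \<open>{1, 2}\<close>, \<open>{0, 2}\<close>.\<close>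
definition vertex3 :: "'a \<Rightarrow> 'a \<Rightarrow> 'a \<Rightarrow> nat \<Rightarrow> 'a" where
  "vertex3 a b c i = (if i = 0 then a else if i = 1 then b else c)"

definition edge3 :: "'a \<Rightarrow> 'a \<Rightarrow> 'a \<Rightarrow> nat \<Rightarrow> nat \<Rightarrow> 'a" where
  "edge3 a01 a12 a02 i j = (if min i j = 0 then (if max i j = 1 then a01 else a02) else a12)"

lemma triangle_to_tripod_vertex3:
  fixes x1 x2 x3 o12 o23 o13 :: "real^'n" and T :: "'b::metric_space set"
    and p pD :: "real^'n \<Rightarrow> 'b" and ob :: 'b and E :: real
  assumes H: "x1 \<in> hyp_space" "x2 \<in> hyp_space" "x3 \<in> hyp_space"
    and tree: "real_tree T" and pT: "p x1 \<in> T" "p x2 \<in> T" "p x3 \<in> T"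
    and approx: "\<And>a b. a \<in> {x1, x2, x3} \<Longrightarrow> b \<in> {x1, x2, x3} \<Longrightarrow>
       hdist a b - E \<le> dist (p a) (p b) \<and> dist (p a) (p b) \<le> hdist a b"
    and ob: "ob \<in> gseg dist T (p x1) (p x2)" "ob \<in> gseg dist T (p x2) (p x3)"
       "ob \<in> gseg dist T (p x1) (p x3)"
    and o12: "o12 \<in> hseg x1 x2" "hdist x1 o12 = gromov_product x1 x2 x3"
    and o23: "o23 \<in> hseg x2 x3" "hdist x2 o23 = gromov_product x2 x3 x1"
    and o13: "o13 \<in> hseg x1 x3" "hdist x1 o13 = gromov_product x1 x3 x2"
    and pD_vertex: "pD x1 = p x1" "pD x2 = p x2" "pD x3 = p x3"
    and pD_internal: "pD o12 = ob" "pD o23 = ob" "pD o13 = ob"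
    and dilation: "dilation_on_seg pD T x1 o12 (p x1) ob" "dilation_on_seg pD T x2 o12 (p x2) ob"
      "dilation_on_seg pD T x2 o23 (p x2) ob" "dilation_on_seg pD T x3 o23 (p x3) ob"
      "dilation_on_seg pD T x1 o13 (p x1) ob" "dilation_on_seg pD T x3 o13 (p x3) ob"
  shows "triangle_to_tripod {0, 1, 2} (vertex3 x1 x2 x3) (edge3 o12 o23 o13)
      (vertex3 (gromov_product x1 x2 x3) (gromov_product x2 x1 x3) (gromov_product x3 x1 x2))
      T (p \<circ> vertex3 x1 x2 x3) ob pD E"
proof -
  have far: "hdist x2 o12 = gromov_product x2 x1 x3" "hdist x3 o23 = gromov_product x3 x1 x2"
      "hdist x3 o13 = gromov_product x3 x1 x2"
    using gseg_dist(1)[OF o12(1)[unfolded hseg_def]] gseg_dist(1)[OF o23(1)[unfolded hseg_def]]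
      gseg_dist(1)[OF o13(1)[unfolded hseg_def]] o12(2) o23(2) o13(2)
    by (simp_all add: gromov_product_def hdist_sym field_simps)
  have three: "i \<in> {0, 1, 2} \<Longrightarrow> i = 0 \<or> i = 1 \<or> i = (2::nat)" for i by auto
  show ?thesis
  proof (unfold_locales, goal_cases)
    case 1 show ?case by simp
  next
    case (2 i) thus ?case using H by (auto simp: vertex3_def)
  next
    case 3 show ?case by (rule tree)
  next
    case (4 i) thus ?case using pT by (auto simp: vertex3_def)
  next
    case (5 i j) thus ?case using approx[of "vertex3 x1 x2 x3 i" "vertex3 x1 x2 x3 j"]
      by (auto simp: vertex3_def)
  next
    case (6 i j k) thus ?case
      using three[of i] three[of j] three[of k] by (auto simp: vertex3_def gromov_product_commute)
  next
    case (7 i j) thus ?case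
      using three[of i] three[of j] o12(1) o23(1) o13(1)
      by (auto simp: vertex3_def edge3_def hseg_commute)
  next
    case (8 i j) thus ?case using three[of i] three[of j] by (auto simp: edge3_def)
  next
    case (9 i j) thus ?case using three[of i] three[of j] o12(2) o23(2) o13(2) far
      by (auto simp: vertex3_def edge3_def gromov_product_commute)
  next
    case (10 i j) thus ?case using three[of i] three[of j] ob
      by (auto simp: vertex3_def tree_seg_commute)
  next
    case (11 i) thus ?case using pD_vertex by (auto simp: vertex3_def)
  next
    case (12 i j) thus ?case using three[of i] three[of j] pD_internal by (auto simp: edge3_def)
  next
    case (13 i j) thus ?case using three[of i] three[of j] dilation
      by (auto simp: vertex3_def edge3_def)
  qed
qed

theorem triangle_tripod_quasi_isometry:
  fixes x1 x2 x3 o12 o23 o13 :: "real^'n" and T :: "'b::metric_space set"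
    and p pD :: "real^'n \<Rightarrow> 'b" and ob :: 'b and E :: real
  assumes "x1 \<in> hyp_space" "x2 \<in> hyp_space" "x3 \<in> hyp_space"
    and "real_tree T" "p x1 \<in> T" "p x2 \<in> T" "p x3 \<in> T"
    and "\<And>a b. a \<in> {x1, x2, x3} \<Longrightarrow> b \<in> {x1, x2, x3} \<Longrightarrow>
       hdist a b - E \<le> dist (p a) (p b) \<and> dist (p a) (p b) \<le> hdist a b"
    and "ob \<in> gseg dist T (p x1) (p x2)" "ob \<in> gseg dist T (p x2) (p x3)"
       "ob \<in> gseg dist T (p x1) (p x3)"
    and "o12 \<in> hseg x1 x2" "hdist x1 o12 = gromov_product x1 x2 x3"
    and "o23 \<in> hseg x2 x3" "hdist x2 o23 = gromov_product x2 x3 x1"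
    and "o13 \<in> hseg x1 x3" "hdist x1 o13 = gromov_product x1 x3 x2"
    and "pD x1 = p x1" "pD x2 = p x2" "pD x3 = p x3"
    and "pD o12 = ob" "pD o23 = ob" "pD o13 = ob"
    and "dilation_on_seg pD T x1 o12 (p x1) ob" "dilation_on_seg pD T x2 o12 (p x2) ob"
      "dilation_on_seg pD T x2 o23 (p x2) ob" "dilation_on_seg pD T x3 o23 (p x3) ob"
      "dilation_on_seg pD T x1 o13 (p x1) ob" "dilation_on_seg pD T x3 o13 (p x3) ob"
  shows "quasi_isometry hdist (geod_triangle x1 x2 x3) dist (tripod T (p x1) (p x2) (p x3))
           pD 1 (2 * E + 2 * ln 3)"
proof -
  interpret triangle_to_tripod "{0, 1, 2}" "vertex3 x1 x2 x3" "edge3 o12 o23 o13"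
      "vertex3 (gromov_product x1 x2 x3) (gromov_product x2 x1 x3) (gromov_product x3 x1 x2)"
      T "p \<circ> vertex3 x1 x2 x3" ob pD E
    by (rule triangle_to_tripod_vertex3) (fact assms)+
  have "triangle_set = geod_triangle x1 x2 x3"
    unfolding triangle_set_def geod_triangle_def by (auto simp: vertex3_def hseg_commute)
  moreover have "tripod_set = tripod T (p x1) (p x2) (p x3)"
    unfolding tripod_set_def tripod_def by (auto simp: vertex3_def tree_seg_commute)
  ultimately show ?thesis using quasi_isometry by simp
qed

theorem mainTheorem6:
  fixes X :: "(real^'n) set" and c :: real
    and T :: "'b::metric_space set" and V :: "'b set" and p :: "real^'n \<Rightarrow> 'b"
    and x1 x2 x3 o12 o23 o13 :: "real^'n"and ob :: 'b
    and pD :: "real^'n \<Rightarrow> 'b"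
  assumes "finite X" "X \<subseteq> hyp_space" "c > 0" "real (card X) \<le> 2 powr c + 2"
    and "gromov_approx_tree c X T V p"
    and "x1 \<in> X" "x2 \<in> X" "x3 \<in> X"
    and "ob \<in> gseg dist T (p x1) (p x2) \<inter> gseg dist T (p x2) (p x3) \<inter> gseg dist T (p x1) (p x3)"
    and "o12 \<in> hseg x1 x2" "hdist x1 o12 = (hdist x1 x2 + hdist x1 x3 - hdist x2 x3) / 2"
    and "o23 \<in> hseg x2 x3" "hdist x2 o23 = (hdist x2 x3 + hdist x2 x1 - hdist x3 x1) / 2"
    and "o13 \<in> hseg x1 x3" "hdist x1 o13 = (hdist x1 x3 + hdist x1 x2 - hdist x3 x2) / 2"
    and "pD ` geod_triangle x1 x2 x3 \<subseteq> tripod T (p x1) (p x2) (p x3)"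
    and "pD x1 = p x1" "pD x2 = p x2" "pD x3 = p x3"
    and "pD o12 = ob" "pD o23 = ob" "pD o13 = ob"
    and "dilation_on_seg pD T x1 o12 (p x1) ob" "dilation_on_seg pD T x2 o12 (p x2) ob"
    and "dilation_on_seg pD T x2 o23 (p x2) ob" "dilation_on_seg pD T x3 o23 (p x3) ob"
    and "dilation_on_seg pD T x1 o13 (p x1) ob" "dilation_on_seg pD T x3 o13 (p x3) ob"
  shows "quasi_isometry hdist (geod_triangle x1 x2 x3) dist (tripod T (p x1) (p x2) (p x3))
           pD 1 (4 * c * ln 3 + 2 * ln 3)"
proof -
  have tree: "real_tree T" and pX: "p ` X \<subseteq> T"
    and approx: "\<forall>a\<in>X. \<forall>b\<in>X. hdist a b - 2 * c * ln 3 \<le> dist (p a) (p b) \<and> dist (p a) (p b) \<le> hdist a b"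
    using assms(5) unfolding gromov_approx_tree_def finite_metric_tree_def by auto
  have vertices: "{x1, x2, x3} \<subseteq> X" using assms(6-8) by simp
  have "quasi_isometry hdist (geod_triangle x1 x2 x3) dist (tripod T (p x1) (p x2) (p x3))
           pD 1 (2 * (2 * c * ln 3) + 2 * ln 3)"
  proof (rule triangle_tripod_quasi_isometry[where ?o12.0 = o12 and ?o23.0 = o23 and ?o13.0 = o13
        and ob = ob, OF _ _ _ tree])
    show "hdist a b - 2 * c * ln 3 \<le> dist (p a) (p b) \<and> dist (p a) (p b) \<le> hdist a b"
      if "a \<in> {x1, x2, x3}" "b \<in> {x1, x2, x3}" for a b
      using approx that vertices by blast
  qed (use assms(2,9-28) vertices pX in \<open>auto simp: gromov_product_def\<close>)
  thus ?thesis by (simp add: algebra_simps)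
qed

end
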